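(* Let $T$ be a tournament, let $v\in V(T)$ and let $c\in\mathbb{N}$ with $c\ge 2$. Suppose that $d^+_T(v)\ge 2^{c-1}$. Then there exist disjoint sets $B,E\subseteq V(T)$ and a vertex $b\in B$ such that: (i) $2\le |B|\le c$ and $T[B]$ is a transitive tournament with sink $b$ and source $v$; (ii) $B\setminus\{b\}$ in-dominates $V(T)\setminus(B\cup E)$; (iii) $|E|\le (1/2)^{c-2} d^+_T(v)$.
   Context: $d^+_T(v)$ is the out-degree of $v$ in $T$. A tournament is transitive if its vertices can be enumerated $v_1,\dots,v_m$ so that $v_iv_j$ is an edge iff $i<j$; then $v_1$ is its source and $v_m$ its sink. A set $B$ in-dominates a set $C$ if for every $x\in C$ there is $b'\in B$ with $xb'\in E(T)$. *)

theory Defs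
  imports Complex_Main
begin

definition tournament :: "'a set \<Rightarrow> ('a \<Rightarrow> 'a \<Rightarrow> bool) \<Rightarrow> bool" where
  "tournament V T \<longleftrightarrow> finite V \<and> (\<forall>x\<in>V. \<not> T x x) \<and>
     (\<forall>x\<in>V. \<forall>y\<in>V. x \<noteq> y \<longrightarrow> (T x y \<or> T y x)) \<and>
     (\<forall>x\<in>V. \<forall>y\<in>V. T x y \<longrightarrow> \<not> T y x)"

definition out_degree :: "'a set \<Rightarrow> ('a \<Rightarrow> 'a \<Rightarrow> bool) \<Rightarrow> 'a \<Rightarrow> nat" where
  "out_degree V T v = card {u \<in> V. T v u}"

definition transitive_sub :: "('a \<Rightarrow> 'a \<Rightarrow> bool) \<Rightarrow> 'a set \<Rightarrow> 'a \<Rightarrow> 'a \<Rightarrow> bool" where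
  "transitive_sub T B s t \<longleftrightarrow> (\<exists>vs. distinct vs \<and> set vs = B \<and> vs \<noteq> [] \<and>
     (\<forall>i<length vs. \<forall>j<length vs. T (vs ! i) (vs ! j) \<longleftrightarrow> i < j) \<and>
     hd vs = s \<and> last vs = t)"

definition in_dominates :: "('a \<Rightarrow> 'a \<Rightarrow> bool) \<Rightarrow> 'a set \<Rightarrow> 'a set \<Rightarrow> bool" where
  "in_dominates T B C \<longleftrightarrow> (\<forall>x\<in>C. \<exists>b'\<in>B. T x b')"

end

theory Submission
  imports Defs
begin

text \<open>Grow a transitive chain v = b_1, b_2, ... greedily, keeping track of the set S of common
  out-neighbours of the chain; every vertex outside the chain and S beats some chain vertex.
  Since some vertex of a tournament has out-degree at most half its order, and a vertex with
  out-degree between 1 and |S|/2 inside T[S] exists once |S| \<ge> 2, each new chain vertex b can be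
  chosen in S with S halving but staying nonempty. Stop when |S| \<le> 1 or the chain has c - 1
  vertices; the sink b is then any vertex of S, and E is the rest of S.\<close>

lemma tournament_subset: "tournament V T \<Longrightarrow> S \<subseteq> V \<Longrightarrow> tournament S T"
  unfolding tournament_def by (meson finite_subset subsetD)

lemma out_degree_plus_in_degree:
  assumes "tournament S T" and "x \<in> S"
  shows "out_degree S T x + card {y \<in> S. T y x} = card S - 1"
proof -
  have fin: "finite S" using assms(1) unfolding tournament_def by blast
  have "{y \<in> S. T x y} \<inter> {y \<in> S. T y x} = {}"
    using assms unfolding tournament_def by blast
  then have "out_degree S T x + card {y \<in> S. T y x}
      = card ({y \<in> S. T x y} \<union> {y \<in> S. T y x})"
    unfolding out_degree_def using fin by (simp add: card_Un_disjoint)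
  also have "{y \<in> S. T x y} \<union> {y \<in> S. T y x} = S - {x}"
    using assms unfolding tournament_def by blast
  finally show ?thesis using assms(2) fin by simp
qed

lemma sum_out_degree:
  assumes "tournament S T"
  shows "2 * (\<Sum>x\<in>S. out_degree S T x) = card S * (card S - 1)"
proof -
  have fin: "finite S" using assms unfolding tournament_def by blast
  have card_as_sum: "card {y \<in> S. P y} = (\<Sum>y\<in>S. if P y then 1 else 0)" for P
    using fin by (simp add: sum.If_cases Int_def)
  have "(\<Sum>x\<in>S. out_degree S T x) = (\<Sum>x\<in>S. card {y \<in> S. T y x})"
    unfolding out_degree_def card_as_sum by (rule sum.swap)
  then have "2 * (\<Sum>x\<in>S. out_degree S T x)
      = (\<Sum>x\<in>S. out_degree S T x + card {y \<in> S. T y x})"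
    by (simp add: sum.distrib)
  also have "\<dots> = (\<Sum>x\<in>S. card S - 1)"
    using out_degree_plus_in_degree[OF assms] by (rule sum.cong[OF refl])
  finally show ?thesis by simp
qed

lemma exists_out_degree_le_half:
  assumes "tournament S T" and "S \<noteq> {}"
  shows "\<exists>x\<in>S. 2 * out_degree S T x + 1 \<le> card S"
proof (rule ccontr)
  assume "\<not> ?thesis"
  then have "(\<Sum>x\<in>S. card S) \<le> (\<Sum>x\<in>S. 2 * out_degree S T x)"
    by (intro sum_mono) auto
  then have "card S * card S \<le> card S * (card S - 1)"
    using sum_out_degree[OF assms(1)] by (simp add: sum_distrib_left)
  moreover have "card S > 0"
    using assms unfolding tournament_def by (simp add: card_gt_0_iff)
  ultimately show False by (simp add: mult_le_cancel1)
qed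

text \<open>If the vertex of low out-degree is a sink of T[S], a vertex of low out-degree in T[S - {x}]
  beats the sink and so has positive out-degree.\<close>

lemma exists_out_degree_pos_le_half:
  assumes tour: "tournament S T" and two: "2 \<le> card S"
  shows "\<exists>b\<in>S. 1 \<le> out_degree S T b \<and> 2 * out_degree S T b \<le> card S"
proof -
  have fin: "finite S" using tour unfolding tournament_def by blast
  have "S \<noteq> {}" using two by auto
  then obtain x where x: "x \<in> S" "2 * out_degree S T x + 1 \<le> card S"
    using exists_out_degree_le_half[OF tour] by blast
  show ?thesis
  proof (cases "out_degree S T x = 0")
    case False
    then show ?thesis using x by (intro bexI[of _ x]) auto
  next
    case True
    then have sink: "\<forall>y\<in>S. \<not> T x y" using fin unfolding out_degree_def by auto
    let ?S' = "S - {x}"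
    have tour': "tournament ?S' T" using tournament_subset[OF tour] by blast
    have card_S': "card ?S' = card S - 1" using fin x(1) by simp
    have "?S' \<noteq> {}"
    proof
      assume "?S' = {}"
      then have "card S - 1 = 0" using card_S' by (simp only: card.empty)
      then show False using two by simp
    qed
    then obtain y where y: "y \<in> ?S'" "2 * out_degree ?S' T y + 1 \<le> card ?S'"
      using exists_out_degree_le_half[OF tour'] by blast
    have "T y x" using tour x(1) y(1) sink unfolding tournament_def by blast
    then have "{z \<in> S. T y z} = insert x {z \<in> ?S'. T y z}" using x(1) by auto
    then have "out_degree S T y = Suc (out_degree ?S' T y)"
      using fin unfolding out_degree_def by simp
    moreover have "y \<in> S" using y(1) by blast
    ultimately show ?thesis using y(2) two card_S' by (intro bexI[of _ y]) simp_all
  qed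
qed

definition transitive_list :: "('a \<Rightarrow> 'a \<Rightarrow> bool) \<Rightarrow> 'a list \<Rightarrow> bool" where
  "transitive_list T vs \<longleftrightarrow> (\<forall>i<length vs. \<forall>j<length vs. T (vs ! i) (vs ! j) \<longleftrightarrow> i < j)"

definition common_out_neighbours :: "'a set \<Rightarrow> ('a \<Rightarrow> 'a \<Rightarrow> bool) \<Rightarrow> 'a list \<Rightarrow> 'a set" where
  "common_out_neighbours V T vs = {x \<in> V. \<forall>u\<in>set vs. T u x}"

lemma transitive_list_distinct:
  assumes "transitive_list T vs"
  shows "distinct vs"
  unfolding distinct_conv_nth
proof (intro allI impI)
  fix i j assume "i < length vs" "j < length vs" "i \<noteq> j"
  then show "vs ! i \<noteq> vs ! j"
    using assms unfolding transitive_list_def by (metis less_asym' linorder_neqE_nat)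
qed

lemma transitive_sub_set_transitive_list:
  "transitive_list T vs \<Longrightarrow> vs \<noteq> [] \<Longrightarrow> transitive_sub T (set vs) (hd vs) (last vs)"
  using transitive_list_distinct unfolding transitive_sub_def transitive_list_def by blast

lemma transitive_list_singleton: "\<not> T v v \<Longrightarrow> transitive_list T [v]"
  unfolding transitive_list_def by simp

lemma transitive_list_snoc:
  assumes tour: "tournament V T" and "set vs \<subseteq> V" and "transitive_list T vs"
    and b: "b \<in> common_out_neighbours V T vs"
  shows "transitive_list T (vs @ [b])"
proof -
  have bV: "b \<in> V" and beaten: "\<forall>u\<in>set vs. T u b"
    using b unfolding common_out_neighbours_def by auto
  have "\<not> T b b" and "\<forall>u\<in>set vs. \<not> T b u"
    using tour bV beaten assms(2) unfolding tournament_def by blast+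
  then show ?thesis
    using assms(3) beaten unfolding transitive_list_def
    by (auto simp: nth_append less_Suc_eq)
qed

lemma common_out_neighbours_snoc:
  "common_out_neighbours V T (vs @ [b]) = {y \<in> common_out_neighbours V T vs. T b y}"
  unfolding common_out_neighbours_def by auto

lemma common_out_neighbours_disjoint:
  "tournament V T \<Longrightarrow> set vs \<inter> common_out_neighbours V T vs = {}"
  unfolding common_out_neighbours_def tournament_def by blast

lemma in_dominates_outside_common_out_neighbours:
  assumes "tournament V T" and "set vs \<subseteq> V"
  shows "in_dominates T (set vs) (V - set vs - common_out_neighbours V T vs)"
  unfolding in_dominates_def
proof
  fix x assume x: "x \<in> V - set vs - common_out_neighbours V T vs"
  then obtain u where "u \<in> set vs" "\<not> T u x"
    unfolding common_out_neighbours_def by blast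
  moreover have "x \<noteq> u" using x \<open>u \<in> set vs\<close> by blast
  ultimately show "\<exists>b'\<in>set vs. T x b'"
    using assms x unfolding tournament_def by blast
qed

lemma close_chain:
  assumes tour: "tournament V T" and tr: "transitive_list T vs" and ne: "vs \<noteq> []"
    and vsV: "set vs \<subseteq> V" and b: "b \<in> common_out_neighbours V T vs"
  defines "B \<equiv> set (vs @ [b])" and "E \<equiv> common_out_neighbours V T vs - {b}"
  shows "B \<subseteq> V \<and> E \<subseteq> V \<and> B \<inter> E = {} \<and> b \<in> B \<and> card B = Suc (length vs) \<and>
    transitive_sub T B (hd vs) b \<and> in_dominates T (B - {b}) (V - (B \<union> E))"
proof -
  have tr': "transitive_list T (vs @ [b])" using transitive_list_snoc[OF tour vsV tr b] .
  have bV: "b \<in> V" using b unfolding common_out_neighbours_def by blast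
  have "b \<notin> set vs" using b common_out_neighbours_disjoint[OF tour] by blast
  then have "B - {b} = set vs" and "V - (B \<union> E) = V - set vs - common_out_neighbours V T vs"
    unfolding B_def E_def using b by auto
  moreover have "card B = Suc (length vs)"
    unfolding B_def using transitive_list_distinct[OF tr'] by (simp add: distinct_card)
  moreover have "transitive_sub T B (hd vs) b"
    using transitive_sub_set_transitive_list[OF tr'] ne unfolding B_def by simp
  ultimately show ?thesis
    using in_dominates_outside_common_out_neighbours[OF tour vsV]
      common_out_neighbours_disjoint[OF tour, of vs] vsV bV
    unfolding B_def E_def common_out_neighbours_def by auto
qed

text \<open>The invariant: after a chain of length m, the common out-neighbourhood S satisfies
  |S| 2^(m-1) \<le> d, so that S is small enough to serve as E once the chain has c - 1 vertices.\<close>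

lemma transitive_chain_extension:
  assumes tour: "tournament V T"
  shows "transitive_list T vs \<Longrightarrow> vs \<noteq> [] \<Longrightarrow> hd vs = v \<Longrightarrow> set vs \<subseteq> V \<Longrightarrow>
    common_out_neighbours V T vs \<noteq> {} \<Longrightarrow> length vs < c \<Longrightarrow>
    card (common_out_neighbours V T vs) * 2 ^ (length vs - 1) \<le> d \<Longrightarrow>
    \<exists>B E b. B \<subseteq> V \<and> E \<subseteq> V \<and> B \<inter> E = {} \<and> b \<in> B \<and>
      2 \<le> card B \<and> card B \<le> c \<and> transitive_sub T B v b \<and>
      in_dominates T (B - {b}) (V - (B \<union> E)) \<and> real (card E) \<le> (1/2) ^ (c - 2) * real d"
proof (induction "c - length vs" arbitrary: vs rule: less_induct)
  case less
  let ?S = "common_out_neighbours V T vs"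
  have finS: "finite ?S"
    using tour unfolding tournament_def common_out_neighbours_def by simp
  have m1: "1 \<le> length vs" using less.prems(2) by (cases vs) auto
  show ?case
  proof (cases "card ?S \<le> 1 \<or> length vs + 1 = c")
    case stop: True
    obtain b where b: "b \<in> ?S" using less.prems(5) by blast
    define E where "E = ?S - {b}"
    have "card E * 2 ^ (c - 2) \<le> d"
    proof (cases "card ?S \<le> 1")
      case True
      then have "card E = 0" unfolding E_def using b finS by simp
      then show ?thesis by simp
    next
      case False
      then have "length vs - 1 = c - 2" using stop by simp
      moreover have "card E \<le> card ?S" unfolding E_def using finS by (simp add: card_mono)
      ultimately have "card E * 2 ^ (c - 2) \<le> card ?S * 2 ^ (length vs - 1)" by simp
      then show ?thesis using less.prems(7) by linarith
    qed
    then have "real (card E * 2 ^ (c - 2)) \<le> real d" by (rule of_nat_mono)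
    then have E_bound: "real (card E) \<le> (1/2) ^ (c - 2) * real d"
      by (simp add: field_simps power_divide)
    define B where "B = set (vs @ [b])"
    note closed = close_chain[OF tour less.prems(1,2,4) b, folded B_def E_def,
        unfolded less.prems(3)]
    have "2 \<le> card B" "card B \<le> c" using closed less.prems(6) m1 by simp_all
    with closed E_bound show ?thesis
      by (elim conjE, intro exI[of _ B] exI[of _ E] exI[of _ b] conjI) assumption+
  next
    case False
    then have two: "2 \<le> card ?S" and long: "length vs + 2 \<le> c" using less.prems(6) by auto
    have tourS: "tournament ?S T"
      by (rule tournament_subset[OF tour]) (auto simp: common_out_neighbours_def)
    obtain b where b: "b \<in> ?S" "1 \<le> out_degree ?S T b" "2 * out_degree ?S T b \<le> card ?S"
      using exists_out_degree_pos_le_half[OF tourS two] by blast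
    let ?vs = "vs @ [b]"
    have card_S': "card (common_out_neighbours V T ?vs) = out_degree ?S T b"
      by (simp only: common_out_neighbours_snoc out_degree_def)
    have "(2::nat) ^ (length ?vs - 1) = 2 * 2 ^ (length vs - 1)"
      using m1 by (cases "length vs") simp_all
    then have "card (common_out_neighbours V T ?vs) * 2 ^ (length ?vs - 1)
        = 2 * out_degree ?S T b * 2 ^ (length vs - 1)"
      by (simp add: card_S')
    also have "\<dots> \<le> card ?S * 2 ^ (length vs - 1)" using b(3) by (rule mult_le_mono1)
    also have "\<dots> \<le> d" by (rule less.prems(7))
    finally have bound: "card (common_out_neighbours V T ?vs) * 2 ^ (length ?vs - 1) \<le> d" .
    have nonempty: "common_out_neighbours V T ?vs \<noteq> {}"
      using b(2) card_S' by auto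
    have "set ?vs \<subseteq> V"
      using less.prems(4) b(1) unfolding common_out_neighbours_def by auto
    moreover have "hd ?vs = v" using less.prems(2,3) by simp
    moreover have "c - length ?vs < c - length vs" "length ?vs < c" using long by simp_all
    moreover note transitive_list_snoc[OF tour less.prems(4,1) b(1)]
    ultimately show ?thesis
      using less.hyps[of ?vs] nonempty bound by blast
  qed
qed

theorem lemma2p4:
  fixes V :: "'a set" and T :: "'a \<Rightarrow> 'a \<Rightarrow> bool" and v :: 'a and c :: nat
  assumes "tournament V T" and "v \<in> V" and "c \<ge> 2"
    and "out_degree V T v \<ge> 2 ^ (c - 1)"
  shows "\<exists>B E b. B \<subseteq> V \<and> E \<subseteq> V \<and> B \<inter> E = {} \<and> b \<in> B \<and>
           2 \<le> card B \<and> card B \<le> c \<and> transitive_sub T B v b \<and>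
           in_dominates T (B - {b}) (V - (B \<union> E)) \<and>
           real (card E) \<le> (1/2) ^ (c - 2) * real (out_degree V T v)"
proof -
  let ?d = "out_degree V T v"
  have out: "common_out_neighbours V T [v] = {u \<in> V. T v u}"
    unfolding common_out_neighbours_def by simp
  have "0 < ?d" using assms(4) less_le_trans[of 0 "2 ^ (c - 1)" ?d] by simp
  then have "common_out_neighbours V T [v] \<noteq> {}"
    unfolding out out_degree_def by (metis card.empty less_irrefl)
  moreover have "transitive_list T [v]"
    using assms(1,2) unfolding tournament_def by (simp add: transitive_list_singleton)
  moreover have "card (common_out_neighbours V T [v]) * 2 ^ (length [v] - 1) \<le> ?d"
    unfolding out out_degree_def by simp
  ultimately show ?thesis
    using transitive_chain_extension[OF assms(1), of "[v]" v c ?d] assms(2,3) by simp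
qed

end
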